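(* For every integer $a\ge1$ and every $x\in\mathbb R$, \[ \int_{-1/2}^{1/2}\log|x^a-y^a|\,dy\ \ge\ -a(2\log2+1). \] *)

theory Defs
  imports "HOL-Analysis.Analysis"
begin

end

theory Submission
  imports Defs "HOL-Real_Asymp.Real_Asymp" "HOL-Computational_Algebra.Fundamental_Theorem_Algebra"
begin

text \<open>
  Over \<open>\<complex>\<close> the polynomial \<open>y\<^sup>a - x\<^sup>a\<close> is \<open>\<Prod>\<^sub>k (y - z\<^sub>k)\<close>, and \<open>\<bar>y - z\<^sub>k\<bar> \<ge> \<bar>y - Re z\<^sub>k\<bar>\<close>.
  Hence, outside finitely many points, \<open>ln \<bar>x\<^sup>a - y\<^sup>a\<bar> \<ge> \<Sum>\<^sub>k ln \<bar>y - c\<^sub>k\<bar>\<close> for \<open>a\<close> real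
  numbers \<open>c\<^sub>k\<close>. For real \<open>c\<close>, the integral of \<open>ln \<bar>y - c\<bar>\<close> over \<open>[-1/2, 1/2]\<close> equals
  \<open>s ln \<bar>s\<bar> + t ln \<bar>t\<bar> - 1\<close> with \<open>s = 1/2 - c\<close> and \<open>t = 1/2 + c\<close>; as \<open>s + t = 1\<close>, this
  entropy-like expression is at least \<open>-ln 2 - 1\<close>, which gives even the bound \<open>-a (ln 2 + 1)\<close>.
  Integrability follows since \<open>ln \<bar>x\<^sup>a - y\<^sup>a\<bar>\<close> lies between that integrable sum and the
  constant \<open>\<bar>x\<bar>\<^sup>a + 1\<close>.
\<close>

text \<open>The real logarithm is totalised: \<open>ln x = ln \<bar>x\<bar>\<close> and \<open>ln 0 = 0\<close>.\<close>
lemma ln_abs_eq: "ln \<bar>x\<bar> = ln (x::real)"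
  by (cases "x \<ge> 0") (simp_all add: ln_minus)

lemma ln_abs_le_abs: "ln \<bar>x\<bar> \<le> \<bar>x::real\<bar>"
  by (cases "x = 0") (simp_all add: less_imp_le)

lemma DERIV_ln_nonzero:
  fixes x :: real
  assumes "x \<noteq> 0"
  shows "(ln has_real_derivative inverse x) (at x)"
proof (cases "x > 0")
  case True
  then show ?thesis by (rule DERIV_ln)
next
  case False
  with assms have "((\<lambda>y. ln (- y)) has_real_derivative inverse x) (at x)"
    by (auto intro!: derivative_eq_intros simp: field_simps)
  then show ?thesis by (simp add: ln_minus)
qed

lemma has_real_derivative_ln_abs:
  fixes f :: "real \<Rightarrow> real"
  assumes "(f has_real_derivative D) (at x within S)" "f x \<noteq> 0"
  shows "((\<lambda>y. ln \<bar>f y\<bar>) has_real_derivative D / f x) (at x within S)"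
  using DERIV_chain2[OF DERIV_ln_nonzero[OF assms(2)] assms(1)]
  by (simp add: ln_abs_eq divide_inverse mult.commute)

lemma continuous_on_mult_ln_abs: "continuous_on UNIV (\<lambda>u::real. u * ln \<bar>u\<bar>)"
proof (rule continuous_at_imp_continuous_on, rule ballI)
  fix u :: real
  show "isCont (\<lambda>u. u * ln \<bar>u\<bar>) u"
  proof (cases "u = 0")
    case True
    have "((\<lambda>u::real. u * ln \<bar>u\<bar>) \<longlongrightarrow> 0) (at_left 0)"
      and "((\<lambda>u::real. u * ln \<bar>u\<bar>) \<longlongrightarrow> 0) (at_right 0)"
      by real_asymp+
    with True show ?thesis by (simp add: isCont_def filterlim_split_at)
  qed (auto intro!: continuous_intros)
qed

lemma has_integral_ln_abs_diff:
  fixes a b c :: real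
  assumes "a \<le> b"
  shows "((\<lambda>y. ln \<bar>y - c\<bar>) has_integral
           ((b - c) * ln \<bar>b - c\<bar> - b) - ((a - c) * ln \<bar>a - c\<bar> - a)) {a..b}"
proof (rule fundamental_theorem_of_calculus_interior_strong[of "{c}"])
  show "continuous_on {a..b} (\<lambda>y. (y - c) * ln \<bar>y - c\<bar> - y)"
    by (intro continuous_intros continuous_on_compose2[OF continuous_on_mult_ln_abs]) auto
  show "((\<lambda>y. (y - c) * ln \<bar>y - c\<bar> - y) has_vector_derivative ln \<bar>y - c\<bar>) (at y)"
    if "y \<in> {a<..<b} - {c}" for y
  proof -
    from that have "((\<lambda>y. ln \<bar>y - c\<bar>) has_real_derivative 1 / (y - c)) (at y)"
      by (intro has_real_derivative_ln_abs) (auto intro!: derivative_eq_intros)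
    then have "((\<lambda>y. (y - c) * ln \<bar>y - c\<bar> - y)
                 has_real_derivative 1 * ln \<bar>y - c\<bar> + 1 / (y - c) * (y - c) - 1) (at y)"
      by (intro DERIV_diff DERIV_mult DERIV_ident) (auto intro!: derivative_eq_intros)
    with that show ?thesis by (simp add: has_real_derivative_iff_has_vector_derivative)
  qed
qed (use assms in auto)

lemma set_integrable_ln_abs_diff:
  fixes a b c :: real
  shows "set_integrable lborel {a..b} (\<lambda>y. ln \<bar>y - c\<bar>)"
proof (cases "a \<le> b")
  case True
  have "(\<lambda>y. ln \<bar>y - c\<bar>) integrable_on {a..b}"
    using has_integral_ln_abs_diff[OF True] by blast
  moreover have "(\<lambda>y. \<bar>a\<bar> + \<bar>b\<bar> + \<bar>c\<bar>) absolutely_integrable_on {a..b}"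
    by simp
  moreover have "ln \<bar>y - c\<bar> \<le> \<bar>a\<bar> + \<bar>b\<bar> + \<bar>c\<bar>" if "y \<in> {a..b}" for y
    using that ln_abs_le_abs[of "y - c"] by auto
  ultimately have "(\<lambda>y. ln \<bar>y - c\<bar>) absolutely_integrable_on {a..b}"
    by (rule absolutely_integrable_absolutely_integrable_ubound)
  then show ?thesis
    unfolding set_integrable_def by (subst (asm) integrable_completion) measurable
qed (simp add: set_integrable_def)

lemma set_integral_ln_abs_diff:
  fixes a b c :: real
  assumes "a \<le> b"
  shows "(LINT y:{a..b}|lborel. ln \<bar>y - c\<bar>)
           = ((b - c) * ln \<bar>b - c\<bar> - b) - ((a - c) * ln \<bar>a - c\<bar> - a)"
  by (simp add: set_borel_integral_eq_integral(2)[OF set_integrable_ln_abs_diff]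
      integral_unique[OF has_integral_ln_abs_diff[OF assms]])

lemma entropy_ge_neg_ln2:
  fixes s t :: real
  assumes "s + t = 1" "s > 0" "t > 0"
  shows "s * ln s + t * ln t \<ge> - ln 2"
proof -
  txt \<open>Gibbs' inequality against the uniform distribution \<open>(1/2, 1/2)\<close>.\<close>
  have "s * ln (2 * s) \<ge> s * (1 - 1 / (2 * s))" "t * ln (2 * t) \<ge> t * (1 - 1 / (2 * t))"
    using assms ln_le_minus_one[of "1 / (2 * s)"] ln_le_minus_one[of "1 / (2 * t)"]
    by (auto intro!: mult_left_mono simp: ln_div)
  moreover have "s * (1 - 1 / (2 * s)) = s - 1/2" "t * (1 - 1 / (2 * t)) = t - 1/2"
    using assms by (simp_all add: field_simps)
  moreover have "s * ln (2 * s) + t * ln (2 * t) = ln 2 + (s * ln s + t * ln t)"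
    using assms by (simp add: ln_mult_pos algebra_simps flip: distrib_right)
  ultimately show ?thesis using assms by linarith
qed

lemma mult_ln_abs_add_ge_zero:
  fixes s t :: real
  assumes "s + t = 1" "s < 0"
  shows "s * ln \<bar>s\<bar> + t * ln \<bar>t\<bar> \<ge> 0"
proof (cases "\<bar>s\<bar> \<le> 1")
  case True
  with assms have "ln \<bar>s\<bar> \<le> 0" "ln \<bar>t\<bar> \<ge> 0"
    by simp_all
  with assms have "s * ln \<bar>s\<bar> \<ge> 0" "t * ln \<bar>t\<bar> \<ge> 0"
    by (simp_all add: mult_nonpos_nonpos)
  then show ?thesis by simp
next
  case False
  with assms have "\<bar>s\<bar> * ln \<bar>s\<bar> \<le> t * ln \<bar>t\<bar>"
    by (intro mult_mono) auto
  with assms show ?thesis by simp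
qed

lemma mult_ln_abs_add_ge_neg_ln2:
  fixes s t :: real
  assumes "s + t = 1"
  shows "s * ln \<bar>s\<bar> + t * ln \<bar>t\<bar> \<ge> - ln 2"
proof -
  have "ln 2 \<ge> (0::real)" by simp
  consider "s < 0" | "t < 0" | "s = 0" | "t = 0" | "s > 0" "t > 0" by linarith
  then show ?thesis
  proof cases
    case 1
    with mult_ln_abs_add_ge_zero[OF assms] \<open>ln 2 \<ge> 0\<close> show ?thesis by linarith
  next
    case 2
    with assms have "t * ln \<bar>t\<bar> + s * ln \<bar>s\<bar> \<ge> 0"
      by (intro mult_ln_abs_add_ge_zero) simp_all
    with \<open>ln 2 \<ge> 0\<close> show ?thesis by linarith
  next
    case 5
    with entropy_ge_neg_ln2[OF assms] show ?thesis by simp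
  qed (use assms in simp_all)
qed

lemma set_integral_ln_abs_diff_ge:
  fixes c :: real
  shows "(LINT y:{-1/2..1/2}|lborel. ln \<bar>y - c\<bar>) \<ge> - ln 2 - 1"
proof -
  have "\<bar>- 1/2 - c\<bar> = \<bar>1/2 + c\<bar>" by linarith
  then have "(LINT y:{-1/2..1/2}|lborel. ln \<bar>y - c\<bar>)
               = (1/2 - c) * ln \<bar>1/2 - c\<bar> + (1/2 + c) * ln \<bar>1/2 + c\<bar> - 1"
    by (simp add: set_integral_ln_abs_diff algebra_simps)
  then show ?thesis using mult_ln_abs_add_ge_neg_ln2[of "1/2 - c" "1/2 + c"] by simp
qed

lemma set_integral_sum_ln_abs_diff_ge:
  fixes C :: "real multiset"
  shows "set_integrable lborel {-1/2..1/2} (\<lambda>y. \<Sum>c\<in>#C. ln \<bar>y - c\<bar>)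
    \<and> (LINT y:{-1/2..1/2}|lborel. \<Sum>c\<in>#C. ln \<bar>y - c\<bar>) \<ge> - real (size C) * (ln 2 + 1)"
proof (induction C)
  case (add w C)
  have int_w: "set_integrable lborel {-1/2..1/2} (\<lambda>y. ln \<bar>y - w\<bar>)"
    by (rule set_integrable_ln_abs_diff)
  from add.IH have int_C: "set_integrable lborel {-1/2..1/2} (\<lambda>y. \<Sum>c\<in>#C. ln \<bar>y - c\<bar>)"
    and ge_C: "(LINT y:{-1/2..1/2}|lborel. \<Sum>c\<in>#C. ln \<bar>y - c\<bar>) \<ge> - real (size C) * (ln 2 + 1)"
    by auto
  have "(LINT y:{-1/2..1/2}|lborel. ln \<bar>y - w\<bar> + (\<Sum>c\<in>#C. ln \<bar>y - c\<bar>))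
        = (LINT y:{-1/2..1/2}|lborel. ln \<bar>y - w\<bar>) + (LINT y:{-1/2..1/2}|lborel. \<Sum>c\<in>#C. ln \<bar>y - c\<bar>)"
    using int_w int_C by (rule set_integral_add(2))
  then show ?case
    using set_integral_add(1)[OF int_w int_C] ge_C set_integral_ln_abs_diff_ge[of w]
    by (simp add: algebra_simps)
qed (simp add: set_integrable_def)

lemma prod_mset_abs_Re_le_norm:
  fixes A :: "complex multiset" and y :: real
  shows "(\<Prod>z\<in>#A. \<bar>y - Re z\<bar>) \<le> cmod (\<Prod>z\<in>#A. of_real y - z)"
proof (induction A)
  case (add w A)
  have "0 \<le> (\<Prod>z\<in>#A. \<bar>y - Re z\<bar>)" by (induction A) auto
  moreover have "\<bar>y - Re w\<bar> \<le> cmod (of_real y - w)"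
    using abs_Re_le_cmod[of "of_real y - w"] by simp
  ultimately show ?case using add.IH by (simp add: norm_mult mult_mono)
qed simp

lemma poly_norm_ge_prod_abs_diff_Re_roots:
  fixes p :: "complex poly"
  assumes "p \<noteq> 0"
  obtains C :: "real multiset" where "size C = degree p"
    "\<And>y. cmod (lead_coeff p) * (\<Prod>c\<in>#C. \<bar>y - c\<bar>) \<le> cmod (poly p (of_real y))"
proof -
  obtain A where A: "size A = degree p" "p = smult (lead_coeff p) (\<Prod>z\<in>#A. [:-z, 1:])"
    using alg_closed_imp_factorization assms by blast
  show ?thesis
  proof (rule that[of "image_mset Re A"])
    fix y :: real
    have "poly p (of_real y) = lead_coeff p * (\<Prod>z\<in>#A. of_real y - z)"
      by (subst (1) A(2)) (simp add: poly_prod_mset multiset.map_comp o_def)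
    then show "cmod (lead_coeff p) * (\<Prod>c\<in>#image_mset Re A. \<bar>y - c\<bar>) \<le> cmod (poly p (of_real y))"
      using prod_mset_abs_Re_le_norm[of y A]
      by (simp add: norm_mult multiset.map_comp o_def mult_left_mono)
  qed (simp add: A(1))
qed

lemma ln_prod_mset_abs_diff:
  fixes C :: "real multiset"
  assumes "y \<notin># C"
  shows "ln (\<Prod>c\<in>#C. \<bar>y - c\<bar>) = (\<Sum>c\<in>#C. ln \<bar>y - c\<bar>)"
  using assms by (induction C) (auto simp: ln_mult)

lemma ln_abs_pow_diff_ge_sum_AE:
  fixes x :: real and a :: nat
  assumes "a \<ge> 1"
  obtains C :: "real multiset" where "size C = a"
    "AE y in lborel. (\<Sum>c\<in>#C. ln \<bar>y - c\<bar>) \<le> ln \<bar>x ^ a - y ^ a\<bar>"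
proof -
  define p :: "complex poly" where "p = monom 1 a + [:- of_real (x ^ a):]"
  have deg: "degree p = a"
    unfolding p_def using assms by (subst degree_add_eq_left) (auto simp: degree_monom_eq)
  then have "lead_coeff p = 1"
    unfolding p_def using assms by (simp add: coeff_pCons split: nat.split)
  moreover have "p \<noteq> 0" using deg assms by auto
  ultimately obtain C where C: "size C = a"
    "\<And>y. (\<Prod>c\<in>#C. \<bar>y - c\<bar>) \<le> cmod (poly p (of_real y))"
    using poly_norm_ge_prod_abs_diff_Re_roots deg by (metis mult_1 norm_one)
  have poly_p: "cmod (poly p (of_real y)) = \<bar>x ^ a - y ^ a\<bar>" for y
    by (simp add: p_def poly_monom flip: of_real_power of_real_diff)
  have bound: "(\<Sum>c\<in>#C. ln \<bar>y - c\<bar>) \<le> ln \<bar>x ^ a - y ^ a\<bar>" if "y \<notin># C" for y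
  proof -
    from that have "(\<Prod>c\<in>#C. \<bar>y - c\<bar>) > 0"
      by (induction C) auto
    with C(2)[of y] that show ?thesis
      by (simp add: poly_p ln_mono flip: ln_prod_mset_abs_diff)
  qed
  have "AE y in lborel. (\<Sum>c\<in>#C. ln \<bar>y - c\<bar>) \<le> ln \<bar>x ^ a - y ^ a\<bar>"
    using AE_not_in[OF finite_imp_null_set_lborel[OF finite_set_mset]] by eventually_elim (rule bound)
  with C(1) show ?thesis by (rule that)
qed

lemma ln_abs_pow_diff_le:
  fixes x y :: real
  assumes "\<bar>y\<bar> \<le> 1"
  shows "ln \<bar>x ^ n - y ^ n\<bar> \<le> \<bar>x\<bar> ^ n + 1"
proof -
  have "\<bar>y\<bar> ^ n \<le> 1" using assms by (intro power_le_one) auto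
  then have "\<bar>x ^ n - y ^ n\<bar> \<le> \<bar>x\<bar> ^ n + 1"
    using abs_triangle_ineq4[of "x ^ n" "y ^ n"] by (simp add: power_abs)
  then show ?thesis using ln_abs_le_abs[of "x ^ n - y ^ n"] by linarith
qed

lemma set_integrable_sandwich:
  fixes f g h :: "'a \<Rightarrow> real"
  assumes "set_integrable M A g" "set_integrable M A h" "set_borel_measurable M A f"
    and "AE x in M. x \<in> A \<longrightarrow> g x \<le> f x \<and> f x \<le> h x"
  shows "set_integrable M A f"
proof (rule set_integrable_bound[of M A "\<lambda>x. \<bar>g x\<bar> + \<bar>h x\<bar>"])
  show "set_integrable M A (\<lambda>x. \<bar>g x\<bar> + \<bar>h x\<bar>)"
    using assms(1,2) by (intro set_integral_add(1) set_integrable_abs)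
  show "AE x in M. x \<in> A \<longrightarrow> norm (f x) \<le> norm (\<bar>g x\<bar> + \<bar>h x\<bar>)"
    using assms(4) by eventually_elim auto
qed fact

theorem mainTheorem6:
  fixes a :: nat and x :: real
  assumes "a \<ge> 1"
  shows "set_integrable lborel {-1/2..1/2::real} (\<lambda>y. ln \<bar>x ^ a - y ^ a\<bar>)
    \<and> (LINT y:{-1/2..1/2}|lborel. ln \<bar>x ^ a - y ^ a\<bar>) \<ge> - real a * (2 * ln 2 + 1)"
proof -
  let ?I = "{-1/2..1/2::real}"
  obtain C where "size C = a"
    and lower: "AE y in lborel. (\<Sum>c\<in>#C. ln \<bar>y - c\<bar>) \<le> ln \<bar>x ^ a - y ^ a\<bar>"
    using ln_abs_pow_diff_ge_sum_AE[OF assms] by blast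
  then have int_sum: "set_integrable lborel ?I (\<lambda>y. \<Sum>c\<in>#C. ln \<bar>y - c\<bar>)"
    and ge_sum: "(LINT y:?I|lborel. \<Sum>c\<in>#C. ln \<bar>y - c\<bar>) \<ge> - real a * (ln 2 + 1)"
    using set_integral_sum_ln_abs_diff_ge[of C] by auto
  have int: "set_integrable lborel ?I (\<lambda>y. ln \<bar>x ^ a - y ^ a\<bar>)"
  proof (rule set_integrable_sandwich[OF int_sum borel_integrable_atLeastAtMost'[OF continuous_on_const]])
    show "set_borel_measurable lborel ?I (\<lambda>y. ln \<bar>x ^ a - y ^ a\<bar>)"
      unfolding set_borel_measurable_def by measurable
    show "AE y in lborel. y \<in> ?I \<longrightarrow> (\<Sum>c\<in>#C. ln \<bar>y - c\<bar>) \<le> ln \<bar>x ^ a - y ^ a\<bar>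
                                   \<and> ln \<bar>x ^ a - y ^ a\<bar> \<le> \<bar>x\<bar> ^ a + 1"
      using lower by eventually_elim (auto intro: ln_abs_pow_diff_le)
  qed
  have "(LINT y:?I|lborel. \<Sum>c\<in>#C. ln \<bar>y - c\<bar>) \<le> (LINT y:?I|lborel. ln \<bar>x ^ a - y ^ a\<bar>)"
    using int_sum int lower by (intro set_integral_mono_AE) auto
  moreover have "- real a * (2 * ln 2 + 1) \<le> - real a * (ln 2 + 1)"
    by (simp add: mult_left_mono)
  ultimately show ?thesis using int ge_sum by linarith
qed

end
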